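(* In the Markovian PRP setting below, assume that $g^p_t$ is $C^1$ and $g^a_t,c_t$ are $C^2$ for $t\in\mathbb{T}$. Then for $\beta\in\mathbb{R}$, $(A,\gamma)\in\mathbb{R}^N\times\mathbb{R}^D$: $$(A,\gamma)\in\mathbb{C}_t(\beta)\iff \beta\mu-\nabla c_t(A)+\beta\sigma\nabla g^a_t(\gamma)=0.$$ Moreover, let $\{(A_t,\beta_t,\gamma_t)\}_{t\in\mathbb{T}}$ be an optimal contract for the Principal (i.e. for each $t$, $(A_t,\beta_t,\gamma_t)$ maximizes $A\mu-c_t(A)+g^a_t(\gamma)+g^p_t(\sigma'A-\gamma)$ over $\beta\in\mathbb{R}$, $(A,\gamma)\in\mathbb{C}_t(\beta)$), and suppose that for every $t$ the matrix $\big[\,\mu+\sigma\nabla g^a_t(\gamma_t)\ \big|\ \beta_t\sigma\nabla^2g^a_t(\gamma_t)\ \big|\ -\nabla^2c_t(A_t)\,\big]\in\mathbb{R}^{N\times(1+D+N)}$ has full rank $N$. Then there exist $\lambda_t\in\mathbb{R}^N$ such that $$0=\beta_t\mu-\nabla c_t(A_t)+\beta_t\sigma\nabla g^a_t(\gamma_t),$$ $$0=\mu-\nabla c_t(A_t)+\sigma\nabla g^p_t(\sigma'A_t-\gamma_t)-\nabla^2c_t(A_t)\lambda_t,$$ $$0=\nabla g^a_t(\gamma_t)-\nabla g^p_t(\sigma'A_t-\gamma_t)+\beta_t\nabla^2g^a_t(\gamma_t)\sigma'\lambda_t,$$ $$0=\lambda_t\cdot[\mu+\sigma\nabla g^a_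t(\gamma_t)].$$
   Context: Markovian PRP setting: $T\in\mathbb{N}$, $\mathbb{T}=\{0,\dots,T-1\}$. The filtration $(\mathcal{F}_t)$ is generated by a $d$-dimensional process $\bar w$ observed by both parties; prices satisfy $\Delta P_{t+1}=diag(P_t)[\mu+\sigma\Delta\bar w_{t+1}]$ with $\mu\in\mathbb{R}^N$ and $\sigma\in\mathbb{R}^{N\times d}$ with linearly independent rows ($d\ge N$), so $\Delta\tilde P_{t+1}:=diag(P_t)^{-1}\Delta P_{t+1}=\mu+\sigma\Delta\bar w_{t+1}$. Predictable Representation Property: there are $(\mathcal{F}_t)$-adapted processes $w^{d+1},\dots,w^D$ such that $w=(\bar w,w^{d+1},\dots,w^D)$ has mutually uncorrelated, zero-mean increments with nontrivial finite second moments, independent of the past, and $L^0(\mathcal{F}_{t+1})=\{x+Z\Delta w_{t+1}:x\in L^0(\mathcal{F}_t),Z\in L^0(\mathcal{F}_t)^D\}$. $\sigma$ is identified with the $N\times D$ matrix obtained by appending $D-d$ zero columns; $\sigma'$ is its transpose. Preferences $U^a,U^p$ satisfy the usual conditions (normalized, proper, monotone, conditionally concave, translation invariant, time consistent); Markov assumption: the generators $g^l_t(z):=U^l_t(z\Delta w_{t+1})$ map $\mathbb{R}^D\to\mathbb{R}$ (deterministic), $l=a,p$; they are concave with $g^l_t(0)=0$. $c_t:\mathbb{R}^N\to\mathbb{R}$ strictly convex. In these variables a contract at time $t$ is $(A,\beta,\gamma)\in\mathbb{R}^N\times\mathbb{R}\times\mathbb{R}^D$ (Agent's continuation $\Gamma$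 has martingale part $\gamma\Delta w_{t+1}$), and $\mathbb{C}_t(\beta)$ is the set of $(A,\gamma)$ such that for all $\bar A\in\mathbb{R}^N$: $g^a_t(\gamma)-c_t(A)\ge\beta(\bar A-A)\mu+g^a_t(\gamma+\beta\sigma'(\bar A-A))-c_t(\bar A)$. *)

theory Defs
  imports "HOL-Analysis.Analysis"
begin

definition grad :: "(real^'k \<Rightarrow> real) \<Rightarrow> real^'k \<Rightarrow> real^'k" where
  "grad f x = (SOME g. GDERIV f x :> g)"

definition hess :: "(real^'k \<Rightarrow> real) \<Rightarrow> real^'k \<Rightarrow> real^'k^'k" where
  "hess f x = jacobian (grad f) (at x)"

definition C1_fun :: "(real^'k \<Rightarrow> real) \<Rightarrow> bool" where
  "C1_fun f \<longleftrightarrow> (\<forall>x. f differentiable (at x)) \<and> continuous_on UNIV (grad f)"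

definition C2_fun :: "(real^'k \<Rightarrow> real) \<Rightarrow> bool" where
  "C2_fun f \<longleftrightarrow> C1_fun f \<and> (\<forall>x. grad f differentiable (at x)) \<and> continuous_on UNIV (hess f)"

definition strictly_convex :: "(real^'k \<Rightarrow> real) \<Rightarrow> bool" where
  "strictly_convex f \<longleftrightarrow> (\<forall>x y u. x \<noteq> y \<and> 0 < u \<and> u < 1 \<longrightarrow>
      f ((1 - u) *\<^sub>R x + u *\<^sub>R y) < (1 - u) * f x + u * f y)"

text \<open>Incentive-compatible set C_t(beta) for the Agent: sigma is the N x D matrix
  (rows indexed by 'n, columns by 'D), sigma' = transpose sigma.\<close>
definition IC_set :: "(real^'D \<Rightarrow> real) \<Rightarrow> (real^'n \<Rightarrow> real) \<Rightarrow> real^'n \<Rightarrow> real^'D^'n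
    \<Rightarrow> real \<Rightarrow> ((real^'n) \<times> (real^'D)) set" where
  "IC_set ga c \<mu> \<sigma> \<beta> = {(A, \<gamma>). \<forall>Ab.
      ga \<gamma> - c A \<ge> \<beta> * ((Ab - A) \<bullet> \<mu>) + ga (\<gamma> + \<beta> *\<^sub>R (transpose \<sigma> *v (Ab - A))) - c Ab}"

definition principal_obj :: "(real^'D \<Rightarrow> real) \<Rightarrow> (real^'D \<Rightarrow> real) \<Rightarrow> (real^'n \<Rightarrow> real)
    \<Rightarrow> real^'n \<Rightarrow> real^'D^'n \<Rightarrow> real^'n \<Rightarrow> real^'D \<Rightarrow> real" where
  "principal_obj ga gp c \<mu> \<sigma> A \<gamma> = A \<bullet> \<mu> - c A + ga \<gamma> + gp (transpose \<sigma> *v A - \<gamma>)"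

text \<open>The N x (1+D+N) matrix [ mu + sigma grad ga | beta sigma hess ga | - hess c ],
  columns indexed by (unit + 'D) + 'n.\<close>
definition KKT_matrix :: "(real^'D \<Rightarrow> real) \<Rightarrow> (real^'n \<Rightarrow> real) \<Rightarrow> real^'n \<Rightarrow> real^'D^'n
    \<Rightarrow> real^'n \<Rightarrow> real \<Rightarrow> real^'D \<Rightarrow> real^((unit + 'D) + 'n)^'n" where
  "KKT_matrix ga c \<mu> \<sigma> A \<beta> \<gamma> = (\<chi> i j. case j of
       Inl (Inl _) \<Rightarrow> (\<mu> + \<sigma> *v grad ga \<gamma>) $ i
     | Inl (Inr k) \<Rightarrow> (\<beta> *\<^sub>R (\<sigma> ** hess ga \<gamma>)) $ i $ k
     | Inr k \<Rightarrow> (- hess c A) $ i $ k)"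

end

theory Submission
  imports Defs
begin

text \<open>
  The Agent's payoff from deviating to effort \<open>Ab\<close> is concave in \<open>Ab\<close> (concave \<open>g\<^sup>a\<close> after an
  affine map, minus the convex cost), so incentive compatibility is equivalent to the vanishing
  of its gradient at the recommended effort.  The Principal therefore maximises a smooth
  objective subject to the smooth equality constraint \<open>agent_foc = 0\<close> in the variables
  \<open>(\<beta>, A, \<gamma>)\<close>.  At a maximiser the derivative of (objective, constraint) cannot be onto, since
  otherwise the open mapping theorem would produce feasible points with a larger value; an
  orthogonal vector gives Fritz John multipliers \<open>(a, \<nu>)\<close>.  The rank condition on the KKT matrix
  excludes \<open>a = 0\<close>, and after normalising \<open>l = \<nu> / a\<close> the symmetry of the Hessians of \<open>g\<^sup>a\<close>
  and \<open>c\<close> turns the multiplier equations into the stated ones.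
\<close>

section \<open>Gradients and Hessians\<close>

lemma has_derivative_grad:
  fixes f :: "real^'k \<Rightarrow> real"
  assumes "f differentiable (at x)"
  shows "(f has_derivative (\<lambda>h. h \<bullet> grad f x)) (at x)"
proof -
  obtain f' where f': "(f has_derivative f') (at x)"
    using assms differentiable_def by blast
  then have "linear f'" using has_derivative_linear by blast
  then have "f' = (\<lambda>h. h \<bullet> adjoint f' 1)"
    using adjoint_works[of f' _ 1] by auto
  with f' have "GDERIV f x :> adjoint f' 1" unfolding gderiv_def by simp
  then have "GDERIV f x :> grad f x" unfolding grad_def by (rule someI)
  then show ?thesis unfolding gderiv_def .
qed

lemma has_derivative_hess:
  fixes f :: "real^'k \<Rightarrow> real"
  assumes "grad f differentiable (at x)"
  shows "(grad f has_derivative (\<lambda>h. hess f x *v h)) (at x)"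
  using assms jacobian_works unfolding hess_def by blast

lemma has_derivative_grad_compose:
  fixes f :: "real^'k \<Rightarrow> real"
  assumes "(u has_derivative u') (at x)" and "f differentiable (at (u x))"
  shows "((\<lambda>y. f (u y)) has_derivative (\<lambda>h. u' h \<bullet> grad f (u x))) (at x)"
  using has_derivative_compose[OF assms(1) has_derivative_grad[OF assms(2)]] .

lemma has_derivative_hess_compose:
  fixes f :: "real^'k \<Rightarrow> real"
  assumes "(u has_derivative u') (at x)" and "grad f differentiable (at (u x))"
  shows "((\<lambda>y. grad f (u y)) has_derivative (\<lambda>h. hess f (u x) *v u' h)) (at x)"
  using has_derivative_compose[OF assms(1) has_derivative_hess[OF assms(2)]] .

lemma second_difference_mean_value:
  fixes f :: "real^'k \<Rightarrow> real"
  assumes df: "\<And>y. f differentiable (at y)" and h: "0 < h"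
  obtains \<xi> where "0 \<le> \<xi>" "\<xi> \<le> h"
    "f (x + h *\<^sub>R v + h *\<^sub>R w) - f (x + h *\<^sub>R v) - f (x + h *\<^sub>R w) + f x
       = h * ((grad f (x + h *\<^sub>R v + \<xi> *\<^sub>R w) - grad f (x + \<xi> *\<^sub>R w)) \<bullet> w)"
proof -
  define \<phi> where "\<phi> t = f (x + h *\<^sub>R v + t *\<^sub>R w) - f (x + t *\<^sub>R w)" for t
  have "(\<phi> has_derivative
      (\<lambda>s. s * ((grad f (x + h *\<^sub>R v + t *\<^sub>R w) - grad f (x + t *\<^sub>R w)) \<bullet> w))) (at t within {0..h})"
    for t
  proof -
    have "((\<lambda>t. x + u + t *\<^sub>R w) has_derivative (\<lambda>s. s *\<^sub>R w)) (at t within {0..h})" for u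
      by (auto intro!: derivative_eq_intros)
    from has_derivative_compose[OF this has_derivative_grad[OF df]]
    have "((\<lambda>t. f (x + u + t *\<^sub>R w)) has_derivative
        (\<lambda>s. s * (w \<bullet> grad f (x + u + t *\<^sub>R w)))) (at t within {0..h})" for u
      by simp
    from has_derivative_diff[OF this[of "h *\<^sub>R v"] this[of 0]] show ?thesis
      unfolding \<phi>_def by (simp add: inner_commute algebra_simps)
  qed
  with h obtain \<xi> where "\<xi> \<in> {0..h}" and "\<phi> h - \<phi> 0 =
      (h - 0) * ((grad f (x + h *\<^sub>R v + \<xi> *\<^sub>R w) - grad f (x + \<xi> *\<^sub>R w)) \<bullet> w)"
    using mvt_very_simple[of 0 h \<phi>] by fastforce
  then show thesis by (intro that[of \<xi>]) (auto simp: \<phi>_def algebra_simps)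
qed

lemma grad_difference_approx:
  fixes f :: "real^'k \<Rightarrow> real"
  assumes "grad f differentiable (at x)" and "e > 0"
  obtains d where "d > 0" and "\<And>y z. norm (y - x) < d \<Longrightarrow> norm (z - x) < d \<Longrightarrow>
      norm (grad f y - grad f z - hess f x *v (y - z)) \<le> e * (norm (y - x) + norm (z - x))"
proof -
  define r where "r y = grad f y - grad f x - hess f x *v (y - x)" for y
  obtain d where "d > 0" and d: "\<And>y. norm (y - x) < d \<Longrightarrow> norm (r y) \<le> e * norm (y - x)"
    using has_derivative_hess[OF assms(1)] assms(2) unfolding has_derivative_at_alt r_def by blast
  have "grad f y - grad f z - hess f x *v (y - z) = r y - r z" for y z
    by (simp add: r_def matrix_vector_mult_diff_distrib algebra_simps)
  with d norm_triangle_ineq4 have "norm (grad f y - grad f z - hess f x *v (y - z))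
      \<le> e * (norm (y - x) + norm (z - x))" if "norm (y - x) < d" "norm (z - x) < d" for y z
    using that by (smt (verit) distrib_left)
  with \<open>d > 0\<close> show thesis by (rule that)
qed

lemma second_difference_approx:
  fixes f :: "real^'k \<Rightarrow> real"
  assumes df: "\<And>y. f differentiable (at y)" and dg: "grad f differentiable (at x)"
    and e: "e > 0"
  shows "\<exists>d>0. \<forall>h. 0 < h \<and> h < d \<longrightarrow>
    \<bar>f (x + h *\<^sub>R v + h *\<^sub>R w) - f (x + h *\<^sub>R v) - f (x + h *\<^sub>R w) + f x
       - h\<^sup>2 * ((hess f x *v v) \<bullet> w)\<bar> \<le> e * h\<^sup>2"
proof -
  define K where "K = norm v + norm w + 1"
  have K: "K \<ge> 1" "norm v \<le> K" "norm w \<le> K" unfolding K_def by auto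
  then have "e / (2 * K\<^sup>2) > 0" using e by simp
  then obtain d where "d > 0" and d: "\<And>y z. norm (y - x) < d \<Longrightarrow> norm (z - x) < d \<Longrightarrow>
      norm (grad f y - grad f z - hess f x *v (y - z)) \<le> e / (2 * K\<^sup>2) * (norm (y - x) + norm (z - x))"
    using grad_difference_approx[OF dg] by blast
  show ?thesis
  proof (intro exI[of _ "d / K"] conjI allI impI)
    show "d / K > 0" using \<open>d > 0\<close> K by simp
    fix h :: real assume h: "0 < h \<and> h < d / K"
    then have "h * K < d" using K by (simp add: field_simps)
    obtain \<xi> where \<xi>: "0 \<le> \<xi>" "\<xi> \<le> h" and mv:
      "f (x + h *\<^sub>R v + h *\<^sub>R w) - f (x + h *\<^sub>R v) - f (x + h *\<^sub>R w) + f x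
         = h * ((grad f (x + h *\<^sub>R v + \<xi> *\<^sub>R w) - grad f (x + \<xi> *\<^sub>R w)) \<bullet> w)"
      using second_difference_mean_value[OF df] h by blast
    define y1 where "y1 = x + h *\<^sub>R v + \<xi> *\<^sub>R w"
    define y2 where "y2 = x + \<xi> *\<^sub>R w"
    have y2: "norm (y2 - x) \<le> h * K"
      using \<xi> h K mult_mono[of \<xi> h "norm w" K] by (simp add: y2_def)
    moreover have y1: "norm (y1 - x) \<le> h * K"
    proof -
      have "norm (y1 - x) \<le> h * norm v + \<xi> * norm w"
        using norm_triangle_ineq[of "h *\<^sub>R v" "\<xi> *\<^sub>R w"] \<xi> h by (simp add: y1_def)
      also have "\<dots> \<le> h * K"
        using \<xi> h mult_right_mono[of \<xi> h "norm w"] by (simp add: K_def algebra_simps)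
      finally show ?thesis .
    qed
    ultimately have "norm (grad f y1 - grad f y2 - hess f x *v (y1 - y2))
        \<le> e / (2 * K\<^sup>2) * (norm (y1 - x) + norm (y2 - x))"
      using d[of y1 y2] \<open>h * K < d\<close> by linarith
    also have "\<dots> \<le> e / (2 * K\<^sup>2) * (2 * (h * K))"
      using y1 y2 e by (intro mult_left_mono) auto
    finally have "norm (grad f y1 - grad f y2 - h *\<^sub>R (hess f x *v v)) \<le> e / (2 * K\<^sup>2) * (2 * (h * K))"
      by (simp add: y1_def y2_def matrix_vector_mult_scaleR)
    then have "\<bar>(grad f y1 - grad f y2 - h *\<^sub>R (hess f x *v v)) \<bullet> w\<bar> \<le> e / (2 * K\<^sup>2) * (2 * (h * K)) * K"
      using Cauchy_Schwarz_ineq2 K(3) by (smt (verit) mult_mono norm_ge_zero)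
    also have "\<dots> = e * h" using K by (simp add: power2_eq_square)
    finally have bound: "\<bar>(grad f y1 - grad f y2 - h *\<^sub>R (hess f x *v v)) \<bullet> w\<bar> \<le> e * h" .
    have "f (x + h *\<^sub>R v + h *\<^sub>R w) - f (x + h *\<^sub>R v) - f (x + h *\<^sub>R w) + f x
        - h\<^sup>2 * ((hess f x *v v) \<bullet> w) = h * ((grad f y1 - grad f y2 - h *\<^sub>R (hess f x *v v)) \<bullet> w)"
      unfolding mv y1_def y2_def by (simp add: inner_diff_left power2_eq_square algebra_simps)
    with bound h show "\<bar>f (x + h *\<^sub>R v + h *\<^sub>R w) - f (x + h *\<^sub>R v) - f (x + h *\<^sub>R w) + f x
       - h\<^sup>2 * ((hess f x *v v) \<bullet> w)\<bar> \<le> e * h\<^sup>2"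
      by (simp add: abs_mult power2_eq_square)
  qed
qed

text \<open>The second difference in the directions \<open>v\<close> and \<open>w\<close> is symmetric in \<open>v, w\<close>, so its two
  approximations \<open>h\<^sup>2 (H v) \<bullet> w\<close> and \<open>h\<^sup>2 (H w) \<bullet> v\<close> must agree.\<close>

lemma hess_inner_commute:
  fixes f :: "real^'k \<Rightarrow> real"
  assumes df: "\<And>y. f differentiable (at y)" and dg: "grad f differentiable (at x)"
  shows "(hess f x *v v) \<bullet> w = (hess f x *v w) \<bullet> v"
proof (rule ccontr)
  define a where "a = (hess f x *v v) \<bullet> w"
  define b where "b = (hess f x *v w) \<bullet> v"
  assume "\<not> ?thesis"
  then have e: "\<bar>a - b\<bar> / 4 > 0" unfolding a_def b_def by simp
  define \<Delta> where "\<Delta> h = f (x + h *\<^sub>R v + h *\<^sub>R w) - f (x + h *\<^sub>R v) - f (x + h *\<^sub>R w) + f x" for h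
  have sym: "\<Delta> h = f (x + h *\<^sub>R w + h *\<^sub>R v) - f (x + h *\<^sub>R w) - f (x + h *\<^sub>R v) + f x" for h
    unfolding \<Delta>_def by (simp add: algebra_simps)
  obtain d1 where "d1 > 0" and d1: "\<And>h. 0 < h \<and> h < d1 \<Longrightarrow> \<bar>\<Delta> h - h\<^sup>2 * a\<bar> \<le> \<bar>a - b\<bar> / 4 * h\<^sup>2"
    using second_difference_approx[OF df dg e, of v w] unfolding a_def \<Delta>_def by blast
  obtain d2 where "d2 > 0" and d2: "\<And>h. 0 < h \<and> h < d2 \<Longrightarrow> \<bar>\<Delta> h - h\<^sup>2 * b\<bar> \<le> \<bar>a - b\<bar> / 4 * h\<^sup>2"
    using second_difference_approx[OF df dg e, of w v] unfolding b_def sym by blast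
  define h where "h = min d1 d2 / 2"
  have h: "0 < h" "h < d1" "h < d2" unfolding h_def using \<open>d1 > 0\<close> \<open>d2 > 0\<close> by auto
  have "h\<^sup>2 * \<bar>a - b\<bar> = \<bar>(\<Delta> h - h\<^sup>2 * b) - (\<Delta> h - h\<^sup>2 * a)\<bar>"
    by (simp add: abs_mult flip: right_diff_distrib)
  also have "\<dots> \<le> 2 * (\<bar>a - b\<bar> / 4 * h\<^sup>2)"
    using d1[of h] d2[of h] h abs_triangle_ineq4[of "\<Delta> h - h\<^sup>2 * b" "\<Delta> h - h\<^sup>2 * a"] by linarith
  finally show False using h e by (simp add: field_simps mult_le_0_iff)
qed

section \<open>Incentive compatibility\<close>

lemma strictly_convex_imp_convex_on:
  assumes "strictly_convex f"
  shows "convex_on UNIV f"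
proof (rule convex_onI)
  fix t :: real and x y assume "0 < t" "t < 1"
  with assms show "f ((1 - t) *\<^sub>R x + t *\<^sub>R y) \<le> (1 - t) * f x + t * f y"
    unfolding strictly_convex_def
    by (cases "x = y") (auto simp: less_imp_le simp flip: scaleR_add_left distrib_right)
qed simp

lemma concave_on_UNIV_max_iff_derivative_zero:
  fixes F :: "'a::real_inner \<Rightarrow> real"
  assumes conc: "concave_on UNIV F" and der: "(F has_derivative (\<lambda>k. k \<bullet> V)) (at x)"
  shows "(\<forall>y. F y \<le> F x) \<longleftrightarrow> V = 0"
proof
  assume "\<forall>y. F y \<le> F x"
  then have "(\<lambda>k. k \<bullet> V) = (\<lambda>k. 0)"
    using differential_zero_maxmin[OF _ open_UNIV der] by blast
  then show "V = 0" by (metis inner_eq_zero_iff)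
next
  assume "V = 0"
  show "\<forall>y. F y \<le> F x"
  proof
    fix y
    define \<phi> where "\<phi> u = - F (x + u *\<^sub>R (y - x))" for u :: real
    have "convex_on UNIV \<phi>"
    proof (rule convex_onI)
      fix t u1 u2 :: real assume "0 < t" "t < 1"
      have "x + ((1 - t) *\<^sub>R u1 + t *\<^sub>R u2) *\<^sub>R (y - x)
          = (1 - t) *\<^sub>R (x + u1 *\<^sub>R (y - x)) + t *\<^sub>R (x + u2 *\<^sub>R (y - x))"
        by (simp add: algebra_simps)
      with concave_onD[OF conc, of t "x + u1 *\<^sub>R (y - x)" "x + u2 *\<^sub>R (y - x)"] \<open>0 < t\<close> \<open>t < 1\<close>
      show "\<phi> ((1 - t) *\<^sub>R u1 + t *\<^sub>R u2) \<le> (1 - t) * \<phi> u1 + t * \<phi> u2"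
        unfolding \<phi>_def by simp
    qed simp
    moreover have "(\<phi> has_field_derivative 0) (at 0)"
    proof -
      have "((\<lambda>u. x + u *\<^sub>R (y - x)) has_derivative (\<lambda>s. s *\<^sub>R (y - x))) (at 0)"
        by (auto intro!: derivative_eq_intros)
      from has_derivative_compose[OF this] der
      have "((\<lambda>u. F (x + u *\<^sub>R (y - x))) has_derivative (\<lambda>s. 0)) (at 0)"
        using \<open>V = 0\<close> by simp
      from has_derivative_minus[OF this] show ?thesis
        unfolding \<phi>_def has_field_derivative_def by (simp add: lambda_zero)
    qed
    ultimately have "\<phi> 1 - \<phi> 0 \<ge> 0"
      using convex_on_imp_above_tangent[of UNIV \<phi> 0 1 0] by simp
    then show "F y \<le> F x" unfolding \<phi>_def by simp
  qed
qed

definition agent_deviation_payoff :: "(real^'D \<Rightarrow> real) \<Rightarrow> (real^'n \<Rightarrow> real) \<Rightarrow> real^'n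
    \<Rightarrow> real^'D^'n \<Rightarrow> real \<Rightarrow> real^'n \<Rightarrow> real^'D \<Rightarrow> real^'n \<Rightarrow> real" where
  "agent_deviation_payoff ga c \<mu> \<sigma> \<beta> A \<gamma> Ab =
     \<beta> * ((Ab - A) \<bullet> \<mu>) + ga (\<gamma> + \<beta> *\<^sub>R (transpose \<sigma> *v (Ab - A))) - c Ab"

definition agent_foc :: "(real^'D \<Rightarrow> real) \<Rightarrow> (real^'n \<Rightarrow> real) \<Rightarrow> real^'n
    \<Rightarrow> real^'D^'n \<Rightarrow> real \<Rightarrow> real^'n \<Rightarrow> real^'D \<Rightarrow> real^'n" where
  "agent_foc ga c \<mu> \<sigma> \<beta> A \<gamma> = \<beta> *\<^sub>R \<mu> - grad c A + \<beta> *\<^sub>R (\<sigma> *v grad ga \<gamma>)"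

lemma IC_set_iff_deviation_payoff:
  "(A, \<gamma>) \<in> IC_set ga c \<mu> \<sigma> \<beta> \<longleftrightarrow>
     (\<forall>Ab. agent_deviation_payoff ga c \<mu> \<sigma> \<beta> A \<gamma> Ab \<le> agent_deviation_payoff ga c \<mu> \<sigma> \<beta> A \<gamma> A)"
  by (simp add: IC_set_def agent_deviation_payoff_def)

lemma concave_agent_deviation_payoff:
  assumes ga: "concave_on UNIV ga" and c: "convex_on UNIV c"
  shows "concave_on UNIV (agent_deviation_payoff ga c \<mu> \<sigma> \<beta> A \<gamma>)"
  unfolding concave_on_def
proof (rule convex_onI)
  fix t :: real and x y assume t: "0 < t" "t < 1"
  let ?z = "\<lambda>Ab. \<gamma> + \<beta> *\<^sub>R (transpose \<sigma> *v (Ab - A))"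
  have "?z ((1 - t) *\<^sub>R x + t *\<^sub>R y) = (1 - t) *\<^sub>R ?z x + t *\<^sub>R ?z y"
    by (simp add: algebra_simps)
  then have "ga (?z ((1 - t) *\<^sub>R x + t *\<^sub>R y)) \<ge> (1 - t) * ga (?z x) + t * ga (?z y)"
    using concave_onD[OF ga, of t] t by simp
  moreover have "c ((1 - t) *\<^sub>R x + t *\<^sub>R y) \<le> (1 - t) * c x + t * c y"
    using convex_onD[OF c, of t] t by simp
  moreover have "((1 - t) *\<^sub>R x + t *\<^sub>R y - A) \<bullet> \<mu> = (1 - t) * ((x - A) \<bullet> \<mu>) + t * ((y - A) \<bullet> \<mu>)"
    by (simp add: algebra_simps)
  ultimately show "- agent_deviation_payoff ga c \<mu> \<sigma> \<beta> A \<gamma> ((1 - t) *\<^sub>R x + t *\<^sub>R y)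
      \<le> (1 - t) * - agent_deviation_payoff ga c \<mu> \<sigma> \<beta> A \<gamma> x + t * - agent_deviation_payoff ga c \<mu> \<sigma> \<beta> A \<gamma> y"
    unfolding agent_deviation_payoff_def by (simp add: algebra_simps)
qed simp

lemma has_derivative_agent_deviation_payoff:
  assumes "ga differentiable (at \<gamma>)" and "c differentiable (at A)"
  shows "(agent_deviation_payoff ga c \<mu> \<sigma> \<beta> A \<gamma> has_derivative
           (\<lambda>k. k \<bullet> agent_foc ga c \<mu> \<sigma> \<beta> A \<gamma>)) (at A)"
proof -
  have "((\<lambda>Ab. \<gamma> + \<beta> *\<^sub>R (transpose \<sigma> *v (Ab - A))) has_derivative
      (\<lambda>k. \<beta> *\<^sub>R (transpose \<sigma> *v k))) (at A)"
    by (rule has_derivative_eq_rhs, (rule derivative_intros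
          bounded_linear.has_derivative[OF matrix_vector_mul_bounded_linear])+) simp
  from has_derivative_grad_compose[OF this] assms(1)
  have continuation: "((\<lambda>Ab. ga (\<gamma> + \<beta> *\<^sub>R (transpose \<sigma> *v (Ab - A)))) has_derivative
      (\<lambda>k. (\<beta> *\<^sub>R (transpose \<sigma> *v k)) \<bullet> grad ga \<gamma>)) (at A)"
    by simp
  have drift: "((\<lambda>Ab. \<beta> * ((Ab - A) \<bullet> \<mu>)) has_derivative (\<lambda>k. \<beta> * (k \<bullet> \<mu>))) (at A)"
    by (auto intro!: derivative_eq_intros)
  show ?thesis
    unfolding agent_deviation_payoff_def agent_foc_def
    by (rule has_derivative_eq_rhs[OF has_derivative_diff[OF has_derivative_add[OF drift continuation]
          has_derivative_grad[OF assms(2)]]])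
      (simp add: dot_lmul_matrix algebra_simps)
qed

lemma IC_set_iff_agent_foc:
  assumes "concave_on UNIV ga" and "strictly_convex c"
    and "ga differentiable (at \<gamma>)" and "c differentiable (at A)"
  shows "(A, \<gamma>) \<in> IC_set ga c \<mu> \<sigma> \<beta> \<longleftrightarrow> agent_foc ga c \<mu> \<sigma> \<beta> A \<gamma> = 0"
  unfolding IC_set_iff_deviation_payoff
  by (intro concave_on_UNIV_max_iff_derivative_zero concave_agent_deviation_payoff
      strictly_convex_imp_convex_on has_derivative_agent_deviation_payoff assms)

section \<open>Fritz John multipliers\<close>

lemma linear_not_surj_imp_orthogonal:
  fixes L :: "'a::real_vector \<Rightarrow> 'b::euclidean_space"
  assumes "linear L" and "\<not> surj L"
  obtains v where "v \<noteq> 0" and "\<And>y. v \<bullet> L y = 0"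
proof -
  have "subspace (range L)"
    using real_vector.linear_subspace_image[OF assms(1) subspace_UNIV] .
  then have "dim (range L) \<noteq> DIM('b)"
    using assms(2) dim_eq_full span_eq_iff by metis
  then have "dim (range L) < DIM('b)"
    using dim_subset_UNIV[of "range L"] by linarith
  then obtain v where "v \<noteq> 0" and "\<And>z. z \<in> span (range L) \<Longrightarrow> orthogonal v z"
    using orthogonal_to_subspace_exists by blast
  then show thesis
    using that span_base[of _ "range L"] by (auto simp: orthogonal_def)
qed

lemma fritz_john_multipliers:
  fixes f :: "'a::euclidean_space \<Rightarrow> real" and h :: "'a \<Rightarrow> 'b::euclidean_space"
  assumes cont: "continuous_on UNIV f" "continuous_on UNIV h"
    and der: "(f has_derivative f') (at x)" "(h has_derivative h') (at x)"
    and feasible: "h x = 0" and max: "\<And>y. h y = 0 \<Longrightarrow> f y \<le> f x"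
  obtains a l where "(a, l) \<noteq> 0" and "\<And>y. a * f' y + l \<bullet> h' y = 0"
proof -
  define \<Phi> where "\<Phi> y = (f y, h y)" for y
  have der\<Phi>: "(\<Phi> has_derivative (\<lambda>y. (f' y, h' y))) (at x)"
    unfolding \<Phi>_def by (rule has_derivative_Pair[OF der])
  then have lin: "linear (\<lambda>y. (f' y, h' y))" by (rule has_derivative_linear)
  have "\<not> surj (\<lambda>y. (f' y, h' y))"
  proof
    assume "surj (\<lambda>y. (f' y, h' y))"
    then obtain g' where g': "linear g'" "(\<lambda>y. (f' y, h' y)) \<circ> g' = id"
      using real_vector.linear_surjective_right_inverse[OF lin] by blast
    have "continuous_on UNIV \<Phi>"
      unfolding \<Phi>_def using cont by (intro continuous_intros)
    \<comment> \<open>open mapping: a neighbourhood of \<open>(f x, 0)\<close> is attained, including a better feasible value\<close>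
    then have "\<Phi> x \<in> interior (range \<Phi>)"
      using sussmann_open_mapping[OF open_UNIV _ _ der\<Phi> _ g'(2) subset_refl] g'(1)
      by (auto simp: linear_conv_bounded_linear)
    then obtain e where "e > 0" and "ball (\<Phi> x) e \<subseteq> range \<Phi>"
      using mem_interior by blast
    moreover have "(f x + e / 2, 0) \<in> ball (\<Phi> x) e"
      using \<open>e > 0\<close> feasible by (simp add: \<Phi>_def dist_Pair_Pair dist_real_def)
    ultimately obtain y where "\<Phi> y = (f x + e / 2, 0)"
      by (metis imageE subsetD)
    with max[of y] \<open>e > 0\<close> show False by (simp add: \<Phi>_def)
  qed
  then obtain v where "v \<noteq> 0" and "\<And>y. v \<bullet> (f' y, h' y) = 0"
    using linear_not_surj_imp_orthogonal[OF lin] by blast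
  moreover have "v \<bullet> (f' y, h' y) = fst v * f' y + snd v \<bullet> h' y" for y
    by (cases v) (simp add: inner_Pair)
  ultimately show thesis
    using that[of "fst v" "snd v"] by simp
qed

lemma full_rank_vector_matrix_eq_0:
  fixes M :: "real^'m^'n"
  assumes "rank M = CARD('n)" and "x v* M = 0"
  shows "x = 0"
proof -
  have "inj ((*v) (transpose M))"
    using assms(1) rank_transpose[of M] full_rank_injective[of "transpose M"] by simp
  moreover have "transpose M *v x = transpose M *v 0"
    using assms(2) by simp
  ultimately show ?thesis by (rule injD)
qed

lemma vector_matrix_mult_nth_inner: "((x :: real^'m) v* (M :: real^'k^'m)) $ k = x \<bullet> (M *v axis k 1)"
  by (simp add: vector_matrix_mult_def matrix_vector_mult_def inner_vec_def axis_def
      if_distrib cong: if_cong)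

lemma KKT_matrix_left_kernel:
  assumes "x \<bullet> (\<mu> + \<sigma> *v grad ga \<gamma>) = 0"
    and "\<And>g. \<beta> * (x \<bullet> (\<sigma> *v (hess ga \<gamma> *v g))) = 0"
    and "\<And>a. x \<bullet> (hess c A *v a) = 0"
  shows "x v* KKT_matrix ga c \<mu> \<sigma> A \<beta> \<gamma> = 0"
proof -
  have "(x v* KKT_matrix ga c \<mu> \<sigma> A \<beta> \<gamma>) $ j = 0" for j
  proof (cases j)
    case (Inl j')
    then show ?thesis
    proof (cases j')
      case (Inl u)
      then show ?thesis
        using assms(1) \<open>j = Inl j'\<close>
        by (simp add: KKT_matrix_def vector_matrix_mult_def inner_vec_def mult.commute)
    next
      case (Inr k)
      have "(x v* KKT_matrix ga c \<mu> \<sigma> A \<beta> \<gamma>) $ j = (x v* (\<beta> *\<^sub>R (\<sigma> ** hess ga \<gamma>))) $ k"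
        by (simp add: KKT_matrix_def vector_matrix_mult_def \<open>j = Inl j'\<close> Inr)
      also have "\<dots> = \<beta> * (x \<bullet> (\<sigma> *v (hess ga \<gamma> *v axis k 1)))"
        by (simp add: vector_matrix_mult_nth_inner matrix_vector_mul_assoc flip: scaleR_matrix_vector_assoc)
      finally show ?thesis using assms(2) by simp
    qed
  next
    case (Inr k)
    have "(x v* KKT_matrix ga c \<mu> \<sigma> A \<beta> \<gamma>) $ j = (x v* (- hess c A)) $ k"
      by (simp add: KKT_matrix_def vector_matrix_mult_def Inr)
    also have "\<dots> = - (x v* hess c A) $ k"
      by (simp add: vector_matrix_mult_def sum_negf)
    also have "\<dots> = - (x \<bullet> (hess c A *v axis k 1))"
      by (simp add: vector_matrix_mult_nth_inner)
    finally show ?thesis using assms(3) by simp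
  qed
  then show ?thesis by (simp add: vec_eq_iff)
qed

section \<open>The Principal's problem\<close>

lemma C1_fun_imp_continuous_on: "C1_fun f \<Longrightarrow> continuous_on UNIV f"
  unfolding C1_fun_def by (simp add: differentiable_imp_continuous_on differentiable_at_imp_differentiable_on)

lemma has_derivative_principal_obj:
  fixes \<mu> A :: "real^'n" and \<sigma> :: "real^'D^'n" and \<gamma> :: "real^'D"
  defines "p \<equiv> transpose \<sigma> *v A - \<gamma>"
  assumes "ga differentiable (at \<gamma>)" and "gp differentiable (at p)" and "c differentiable (at A)"
  shows "((\<lambda>x. principal_obj ga gp c \<mu> \<sigma> (fst (snd x)) (snd (snd x))) has_derivative
     (\<lambda>y. fst (snd y) \<bullet> (\<mu> - grad c A + \<sigma> *v grad gp p) + snd (snd y) \<bullet> (grad ga \<gamma> - grad gp p)))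
     (at (\<beta>, A, \<gamma>))"
proof -
  have effort: "((\<lambda>x. fst (snd x)) has_derivative (\<lambda>y. fst (snd y))) (at (\<beta>, A, \<gamma>))"
    and volatility: "((\<lambda>x. snd (snd x)) has_derivative (\<lambda>y. snd (snd y))) (at (\<beta>, A, \<gamma>))"
    by (auto intro!: derivative_eq_intros)
  have "((\<lambda>x. transpose \<sigma> *v fst (snd x) - snd (snd x)) has_derivative
      (\<lambda>y. transpose \<sigma> *v fst (snd y) - snd (snd y))) (at (\<beta>, A, \<gamma>))"
    by (intro derivative_intros bounded_linear.has_derivative[OF matrix_vector_mul_bounded_linear]
        effort volatility)
  from has_derivative_grad_compose[OF this, where f = gp] assms(3)
  have payoff: "((\<lambda>x. gp (transpose \<sigma> *v fst (snd x) - snd (snd x))) has_derivative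
      (\<lambda>y. (transpose \<sigma> *v fst (snd y) - snd (snd y)) \<bullet> grad gp p)) (at (\<beta>, A, \<gamma>))"
    by (simp add: p_def)
  have agent: "((\<lambda>x. ga (snd (snd x))) has_derivative (\<lambda>y. snd (snd y) \<bullet> grad ga \<gamma>)) (at (\<beta>, A, \<gamma>))"
    using has_derivative_grad_compose[OF volatility, where f = ga] assms(2) by simp
  have cost: "((\<lambda>x. c (fst (snd x))) has_derivative (\<lambda>y. fst (snd y) \<bullet> grad c A)) (at (\<beta>, A, \<gamma>))"
    using has_derivative_grad_compose[OF effort, where f = c] assms(4) by simp
  show ?thesis
    unfolding principal_obj_def
    by (rule has_derivative_eq_rhs[OF has_derivative_add[OF has_derivative_add[OF
          has_derivative_diff[OF has_derivative_inner_left[OF effort] cost] agent] payoff]])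
      (simp add: dot_lmul_matrix algebra_simps)
qed

lemma has_derivative_agent_foc:
  assumes "grad ga differentiable (at \<gamma>)" and "grad c differentiable (at A)"
  shows "((\<lambda>x. agent_foc ga c \<mu> \<sigma> (fst x) (fst (snd x)) (snd (snd x))) has_derivative
     (\<lambda>y. fst y *\<^sub>R (\<mu> + \<sigma> *v grad ga \<gamma>) + \<beta> *\<^sub>R (\<sigma> *v (hess ga \<gamma> *v snd (snd y)))
          - hess c A *v fst (snd y))) (at (\<beta>, A, \<gamma>))"
proof -
  have "((\<lambda>x. grad ga (snd (snd x))) has_derivative (\<lambda>y. hess ga \<gamma> *v snd (snd y))) (at (\<beta>, A, \<gamma>))"
    using has_derivative_hess_compose[OF has_derivative_snd[OF has_derivative_snd[OF has_derivative_ident]],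
        where f = ga and x = "(\<beta>, A, \<gamma>)"] assms(1) by simp
  from bounded_linear.has_derivative[OF matrix_vector_mul_bounded_linear this, of \<sigma>]
  have agent: "((\<lambda>x. fst x *\<^sub>R (\<sigma> *v grad ga (snd (snd x)))) has_derivative
      (\<lambda>y. \<beta> *\<^sub>R (\<sigma> *v (hess ga \<gamma> *v snd (snd y))) + fst y *\<^sub>R (\<sigma> *v grad ga \<gamma>))) (at (\<beta>, A, \<gamma>))"
    using has_derivative_scaleR[OF has_derivative_fst[OF has_derivative_ident]] by fastforce
  have cost: "((\<lambda>x. grad c (fst (snd x))) has_derivative (\<lambda>y. hess c A *v fst (snd y))) (at (\<beta>, A, \<gamma>))"
    using has_derivative_hess_compose[OF has_derivative_fst[OF has_derivative_snd[OF has_derivative_ident]],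
        where f = c and x = "(\<beta>, A, \<gamma>)"] assms(2) by simp
  show ?thesis
    unfolding agent_foc_def
    by (rule has_derivative_eq_rhs[OF has_derivative_add[OF has_derivative_diff[OF
          has_derivative_scaleR_left[OF has_derivative_fst[OF has_derivative_ident]] cost] agent]])
      (simp add: algebra_simps)
qed

lemma continuous_on_principal_obj:
  assumes "continuous_on UNIV ga" and "continuous_on UNIV gp" and "continuous_on UNIV c"
  shows "continuous_on UNIV (\<lambda>x. principal_obj ga gp c \<mu> \<sigma> (fst (snd x)) (snd (snd x)))"
  unfolding principal_obj_def
  by (intro continuous_intros continuous_on_compose2[OF assms(1)] continuous_on_compose2[OF assms(2)]
      continuous_on_compose2[OF assms(3)] bounded_linear.continuous_on[OF matrix_vector_mul_bounded_linear])
    auto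

lemma continuous_on_agent_foc:
  assumes "continuous_on UNIV (grad ga)" and "continuous_on UNIV (grad c)"
  shows "continuous_on UNIV (\<lambda>x. agent_foc ga c \<mu> \<sigma> (fst x) (fst (snd x)) (snd (snd x)))"
  unfolding agent_foc_def
  by (intro continuous_intros continuous_on_compose2[OF assms(1)] continuous_on_compose2[OF assms(2)]
      bounded_linear.continuous_on[OF matrix_vector_mul_bounded_linear]) auto

lemma optimal_contract_fritz_john:
  fixes ga gp :: "real^'D \<Rightarrow> real" and c :: "real^'n \<Rightarrow> real" and \<sigma> :: "real^'D^'n"
    and A0 :: "real^'n" and \<gamma>0 :: "real^'D"
  defines "p0 \<equiv> transpose \<sigma> *v A0 - \<gamma>0"
  assumes ga: "concave_on UNIV ga" "C2_fun ga" and c: "strictly_convex c" "C2_fun c"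
    and gp: "C1_fun gp"
    and IC0: "(A0, \<gamma>0) \<in> IC_set ga c \<mu> \<sigma> \<beta>0"
    and opt: "\<forall>\<beta> A \<gamma>. (A, \<gamma>) \<in> IC_set ga c \<mu> \<sigma> \<beta> \<longrightarrow>
               principal_obj ga gp c \<mu> \<sigma> A \<gamma> \<le> principal_obj ga gp c \<mu> \<sigma> A0 \<gamma>0"
  obtains a l where "(a, l) \<noteq> 0"
    and "l \<bullet> (\<mu> + \<sigma> *v grad ga \<gamma>0) = 0"
    and "\<And>g. a * (g \<bullet> (grad ga \<gamma>0 - grad gp p0)) + \<beta>0 * (l \<bullet> (\<sigma> *v (hess ga \<gamma>0 *v g))) = 0"
    and "\<And>d. a * (d \<bullet> (\<mu> - grad c A0 + \<sigma> *v grad gp p0)) - l \<bullet> (hess c A0 *v d) = 0"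
proof -
  have dga: "\<And>y. ga differentiable (at y)" "\<And>y. grad ga differentiable (at y)"
    and dc: "\<And>y. c differentiable (at y)" "\<And>y. grad c differentiable (at y)"
    and dgp: "\<And>y. gp differentiable (at y)"
    using ga(2) c(2) gp unfolding C2_fun_def C1_fun_def by auto
  have cont: "continuous_on UNIV ga" "continuous_on UNIV (grad ga)"
    "continuous_on UNIV c" "continuous_on UNIV (grad c)" "continuous_on UNIV gp"
    using ga(2) c(2) gp by (auto simp: C2_fun_def C1_fun_def C1_fun_imp_continuous_on)
  define f where "f x = principal_obj ga gp c \<mu> \<sigma> (fst (snd x)) (snd (snd x))"
    for x :: "real \<times> (real^'n) \<times> (real^'D)"
  define h where "h x = agent_foc ga c \<mu> \<sigma> (fst x) (fst (snd x)) (snd (snd x))"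
    for x :: "real \<times> (real^'n) \<times> (real^'D)"
  have "continuous_on UNIV f"
    unfolding f_def by (rule continuous_on_principal_obj[OF cont(1,5,3)])
  moreover have "continuous_on UNIV h"
    unfolding h_def by (rule continuous_on_agent_foc[OF cont(2,4)])
  moreover have "(f has_derivative (\<lambda>y. fst (snd y) \<bullet> (\<mu> - grad c A0 + \<sigma> *v grad gp p0)
      + snd (snd y) \<bullet> (grad ga \<gamma>0 - grad gp p0))) (at (\<beta>0, A0, \<gamma>0))"
    unfolding f_def p0_def by (rule has_derivative_principal_obj[OF dga(1) dgp dc(1)])
  moreover note has_derivative_agent_foc[OF dga(2) dc(2), where \<mu> = \<mu> and \<sigma> = \<sigma> and \<beta> = \<beta>0, folded h_def]
  moreover have "h (\<beta>0, A0, \<gamma>0) = 0"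
    using IC0 IC_set_iff_agent_foc[OF ga(1) c(1) dga(1) dc(1)] by (simp add: h_def)
  moreover have "f x \<le> f (\<beta>0, A0, \<gamma>0)" if "h x = 0" for x
    using that opt IC_set_iff_agent_foc[OF ga(1) c(1) dga(1) dc(1)] by (simp add: f_def h_def)
  ultimately obtain a l where "(a, l) \<noteq> 0" and multipliers: "\<And>y. a *
      (fst (snd y) \<bullet> (\<mu> - grad c A0 + \<sigma> *v grad gp p0) + snd (snd y) \<bullet> (grad ga \<gamma>0 - grad gp p0))
      + l \<bullet> (fst y *\<^sub>R (\<mu> + \<sigma> *v grad ga \<gamma>0) + \<beta>0 *\<^sub>R (\<sigma> *v (hess ga \<gamma>0 *v snd (snd y)))
          - hess c A0 *v fst (snd y)) = 0"
    by (rule fritz_john_multipliers) auto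
  show thesis
  proof (rule that[OF \<open>(a, l) \<noteq> 0\<close>])
    show "l \<bullet> (\<mu> + \<sigma> *v grad ga \<gamma>0) = 0" using multipliers[of "(1, 0, 0)"] by simp
    show "a * (g \<bullet> (grad ga \<gamma>0 - grad gp p0)) + \<beta>0 * (l \<bullet> (\<sigma> *v (hess ga \<gamma>0 *v g))) = 0" for g
      using multipliers[of "(0, 0, g)"] by simp
    show "a * (d \<bullet> (\<mu> - grad c A0 + \<sigma> *v grad gp p0)) - l \<bullet> (hess c A0 *v d) = 0" for d
      using multipliers[of "(0, d, 0)"] by (simp add: inner_diff_right)
  qed
qed

lemma KKT_matrix_full_rank_imp_normal_multiplier:
  assumes rank: "rank (KKT_matrix ga c \<mu> \<sigma> A \<beta> \<gamma>) = CARD('n)"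
    and nonzero: "(a, \<nu>) \<noteq> (0 :: real \<times> (real^'n))"
    and "\<nu> \<bullet> (\<mu> + \<sigma> *v grad ga \<gamma>) = 0"
    and "\<And>g. a * (g \<bullet> u) + \<beta> * (\<nu> \<bullet> (\<sigma> *v (hess ga \<gamma> *v g))) = 0"
    and "\<And>d. a * (d \<bullet> w) - \<nu> \<bullet> (hess c A *v d) = 0"
  shows "a \<noteq> 0"
proof
  assume "a = 0"
  with assms(3-) have "\<nu> v* KKT_matrix ga c \<mu> \<sigma> A \<beta> \<gamma> = 0"
    by (intro KKT_matrix_left_kernel) auto
  with rank have "\<nu> = 0" by (rule full_rank_vector_matrix_eq_0)
  with nonzero \<open>a = 0\<close> show False by (simp add: zero_prod_def)
qed

lemma optimal_contract_KKT:
  fixes ga gp :: "real^'D \<Rightarrow> real" and c :: "real^'n \<Rightarrow> real" and \<sigma> :: "real^'D^'n"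
    and A0 :: "real^'n" and \<gamma>0 :: "real^'D"
  assumes ga: "concave_on UNIV ga" "C2_fun ga" and c: "strictly_convex c" "C2_fun c"
    and gp: "C1_fun gp"
    and IC0: "(A0, \<gamma>0) \<in> IC_set ga c \<mu> \<sigma> \<beta>0"
    and opt: "\<forall>\<beta> A \<gamma>. (A, \<gamma>) \<in> IC_set ga c \<mu> \<sigma> \<beta> \<longrightarrow>
               principal_obj ga gp c \<mu> \<sigma> A \<gamma> \<le> principal_obj ga gp c \<mu> \<sigma> A0 \<gamma>0"
    and rank: "rank (KKT_matrix ga c \<mu> \<sigma> A0 \<beta>0 \<gamma>0) = CARD('n)"
  shows "\<exists>l :: real^'n.
             0 = \<beta>0 *\<^sub>R \<mu> - grad c A0 + \<beta>0 *\<^sub>R (\<sigma> *v grad ga \<gamma>0)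
           \<and> 0 = \<mu> - grad c A0 + \<sigma> *v grad gp (transpose \<sigma> *v A0 - \<gamma>0) - hess c A0 *v l
           \<and> 0 = grad ga \<gamma>0 - grad gp (transpose \<sigma> *v A0 - \<gamma>0)
                 + \<beta>0 *\<^sub>R (hess ga \<gamma>0 *v (transpose \<sigma> *v l))
           \<and> 0 = l \<bullet> (\<mu> + \<sigma> *v grad ga \<gamma>0)"
proof -
  define p0 where "p0 = transpose \<sigma> *v A0 - \<gamma>0"
  obtain a \<nu> where "(a, \<nu>) \<noteq> 0" and slack: "\<nu> \<bullet> (\<mu> + \<sigma> *v grad ga \<gamma>0) = 0"
    and volatility: "\<And>g. a * (g \<bullet> (grad ga \<gamma>0 - grad gp p0)) + \<beta>0 * (\<nu> \<bullet> (\<sigma> *v (hess ga \<gamma>0 *v g))) = 0"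
    and effort: "\<And>d. a * (d \<bullet> (\<mu> - grad c A0 + \<sigma> *v grad gp p0)) - \<nu> \<bullet> (hess c A0 *v d) = 0"
    using optimal_contract_fritz_john[OF ga c gp IC0 opt] unfolding p0_def by blast
  have "a \<noteq> 0"
    using KKT_matrix_full_rank_imp_normal_multiplier[OF rank \<open>(a, \<nu>) \<noteq> 0\<close> slack volatility effort] .
  define l where "l = \<nu> /\<^sub>R a"
  have \<nu>_eq: "\<nu> = a *\<^sub>R l" using \<open>a \<noteq> 0\<close> by (simp add: l_def)
  have dga: "\<And>y. ga differentiable (at y)" "\<And>y. grad ga differentiable (at y)"
    and dc: "\<And>y. c differentiable (at y)" "\<And>y. grad c differentiable (at y)"
    using ga(2) c(2) unfolding C2_fun_def C1_fun_def by auto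
  have "d \<bullet> (\<mu> - grad c A0 + \<sigma> *v grad gp p0 - hess c A0 *v l) = 0" for d
  proof -
    have "\<nu> \<bullet> (hess c A0 *v d) = a * (d \<bullet> (hess c A0 *v l))"
      using hess_inner_commute[OF dc, of A0 d l] by (simp add: \<nu>_eq inner_commute)
    with effort[of d] \<open>a \<noteq> 0\<close> show ?thesis by (simp add: inner_diff_right right_diff_distrib)
  qed
  then have "\<mu> - grad c A0 + \<sigma> *v grad gp p0 - hess c A0 *v l = 0"
    by (metis inner_eq_zero_iff)
  moreover have "g \<bullet> (grad ga \<gamma>0 - grad gp p0 + \<beta>0 *\<^sub>R (hess ga \<gamma>0 *v (transpose \<sigma> *v l))) = 0" for g
  proof -
    have "\<nu> \<bullet> (\<sigma> *v (hess ga \<gamma>0 *v g)) = a * ((transpose \<sigma> *v l) \<bullet> (hess ga \<gamma>0 *v g))"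
      by (simp add: \<nu>_eq dot_lmul_matrix)
    also have "\<dots> = a * (g \<bullet> (hess ga \<gamma>0 *v (transpose \<sigma> *v l)))"
      using hess_inner_commute[OF dga, of \<gamma>0 g "transpose \<sigma> *v l"] by (simp add: inner_commute)
    finally have "a * (g \<bullet> (grad ga \<gamma>0 - grad gp p0 + \<beta>0 *\<^sub>R (hess ga \<gamma>0 *v (transpose \<sigma> *v l)))) = 0"
      using volatility[of g] by (simp add: inner_add_right algebra_simps)
    with \<open>a \<noteq> 0\<close> show ?thesis by simp
  qed
  then have "grad ga \<gamma>0 - grad gp p0 + \<beta>0 *\<^sub>R (hess ga \<gamma>0 *v (transpose \<sigma> *v l)) = 0"
    by (metis inner_eq_zero_iff)
  moreover have "\<beta>0 *\<^sub>R \<mu> - grad c A0 + \<beta>0 *\<^sub>R (\<sigma> *v grad ga \<gamma>0) = 0"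
    using IC0 IC_set_iff_agent_foc[OF ga(1) c(1) dga(1) dc(1)] by (simp add: agent_foc_def)
  moreover have "l \<bullet> (\<mu> + \<sigma> *v grad ga \<gamma>0) = 0"
    using slack \<open>a \<noteq> 0\<close> by (simp add: \<nu>_eq)
  ultimately show ?thesis unfolding p0_def by (intro exI[of _ l]) auto
qed

theorem mainTheorem9:
  fixes T :: nat
    and \<mu> :: "real^'n"
    and \<sigma> :: "real^'D^'n"
    and ga gp :: "nat \<Rightarrow> real^'D \<Rightarrow> real"
    and c :: "nat \<Rightarrow> real^'n \<Rightarrow> real"
    and At :: "nat \<Rightarrow> real^'n" and \<beta>t :: "nat \<Rightarrow> real" and \<gamma>t :: "nat \<Rightarrow> real^'D"
  assumes sigma_rows: "rank \<sigma> = CARD('n)"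
    and ga_concave: "\<And>t. t < T \<Longrightarrow> concave_on UNIV (ga t)"
    and gp_concave: "\<And>t. t < T \<Longrightarrow> concave_on UNIV (gp t)"
    and ga_zero: "\<And>t. t < T \<Longrightarrow> ga t 0 = 0"
    and gp_zero: "\<And>t. t < T \<Longrightarrow> gp t 0 = 0"
    and c_strict: "\<And>t. t < T \<Longrightarrow> strictly_convex (c t)"
    and gp_C1: "\<And>t. t < T \<Longrightarrow> C1_fun (gp t)"
    and ga_C2: "\<And>t. t < T \<Longrightarrow> C2_fun (ga t)"
    and c_C2: "\<And>t. t < T \<Longrightarrow> C2_fun (c t)"
  shows "(\<forall>t<T. \<forall>\<beta> A \<gamma>. (A, \<gamma>) \<in> IC_set (ga t) (c t) \<mu> \<sigma> \<beta> \<longleftrightarrow>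
            \<beta> *\<^sub>R \<mu> - grad (c t) A + \<beta> *\<^sub>R (\<sigma> *v grad (ga t) \<gamma>) = 0)
    \<and> ((\<forall>t<T. (At t, \<gamma>t t) \<in> IC_set (ga t) (c t) \<mu> \<sigma> (\<beta>t t)
          \<and> (\<forall>\<beta> A \<gamma>. (A, \<gamma>) \<in> IC_set (ga t) (c t) \<mu> \<sigma> \<beta> \<longrightarrow>
               principal_obj (ga t) (gp t) (c t) \<mu> \<sigma> A \<gamma>
                 \<le> principal_obj (ga t) (gp t) (c t) \<mu> \<sigma> (At t) (\<gamma>t t)))
       \<longrightarrow> (\<forall>t<T. rank (KKT_matrix (ga t) (c t) \<mu> \<sigma> (At t) (\<beta>t t) (\<gamma>t t)) = CARD('n))
       \<longrightarrow> (\<forall>t<T. \<exists>l :: real^'n.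
             0 = \<beta>t t *\<^sub>R \<mu> - grad (c t) (At t) + \<beta>t t *\<^sub>R (\<sigma> *v grad (ga t) (\<gamma>t t))
           \<and> 0 = \<mu> - grad (c t) (At t) + \<sigma> *v grad (gp t) (transpose \<sigma> *v At t - \<gamma>t t)
                 - hess (c t) (At t) *v l
           \<and> 0 = grad (ga t) (\<gamma>t t) - grad (gp t) (transpose \<sigma> *v At t - \<gamma>t t)
                 + \<beta>t t *\<^sub>R (hess (ga t) (\<gamma>t t) *v (transpose \<sigma> *v l))
           \<and> 0 = l \<bullet> (\<mu> + \<sigma> *v grad (ga t) (\<gamma>t t))))"
proof (intro conjI impI allI)
  fix t \<beta> A \<gamma> assume t: "t < T"
  have "ga t differentiable (at \<gamma>)" and "c t differentiable (at A)"
    using ga_C2[OF t] c_C2[OF t] by (auto simp: C2_fun_def C1_fun_def)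
  from IC_set_iff_agent_foc[OF ga_concave[OF t] c_strict[OF t] this]
  show "(A, \<gamma>) \<in> IC_set (ga t) (c t) \<mu> \<sigma> \<beta> \<longleftrightarrow>
      \<beta> *\<^sub>R \<mu> - grad (c t) A + \<beta> *\<^sub>R (\<sigma> *v grad (ga t) \<gamma>) = 0"
    unfolding agent_foc_def .
next
  fix t assume t: "t < T"
    and optimal: "\<forall>t<T. (At t, \<gamma>t t) \<in> IC_set (ga t) (c t) \<mu> \<sigma> (\<beta>t t)
          \<and> (\<forall>\<beta> A \<gamma>. (A, \<gamma>) \<in> IC_set (ga t) (c t) \<mu> \<sigma> \<beta> \<longrightarrow>
               principal_obj (ga t) (gp t) (c t) \<mu> \<sigma> A \<gamma>
                 \<le> principal_obj (ga t) (gp t) (c t) \<mu> \<sigma> (At t) (\<gamma>t t))"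
    and rank: "\<forall>t<T. rank (KKT_matrix (ga t) (c t) \<mu> \<sigma> (At t) (\<beta>t t) (\<gamma>t t)) = CARD('n)"
  from optimal_contract_KKT[OF ga_concave[OF t] ga_C2[OF t] c_strict[OF t] c_C2[OF t] gp_C1[OF t]]
    optimal rank t
  show "\<exists>l :: real^'n.
             0 = \<beta>t t *\<^sub>R \<mu> - grad (c t) (At t) + \<beta>t t *\<^sub>R (\<sigma> *v grad (ga t) (\<gamma>t t))
           \<and> 0 = \<mu> - grad (c t) (At t) + \<sigma> *v grad (gp t) (transpose \<sigma> *v At t - \<gamma>t t)
                 - hess (c t) (At t) *v l
           \<and> 0 = grad (ga t) (\<gamma>t t) - grad (gp t) (transpose \<sigma> *v At t - \<gamma>t t)
                 + \<beta>t t *\<^sub>R (hess (ga t) (\<gamma>t t) *v (transpose \<sigma> *v l))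
           \<and> 0 = l \<bullet> (\<mu> + \<sigma> *v grad (ga t) (\<gamma>t t))"
    by blast
qed

end
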